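(* Let $\mathbb{F}_q$ be a finite field and $n\ge3$. For $n$ odd and $\alpha\in\mathbb{F}_q^*$ let $N_{\mathbb{D}_n}(\alpha)$ be the number of $\mathbb{F}_q$-points of $X_{\mathbb{D}_n}(\alpha,1,\dots,1)$; for $n$ even and $\alpha,\beta\in\mathbb{F}_q^*$ let $N_{\mathbb{D}_n}(\alpha,\beta)$ be the number of $\mathbb{F}_q$-points of $X_{\mathbb{D}_n}(\alpha,\beta,1,\dots,1)$. Then: (1) if $n$ is odd and $\alpha\neq1$, $N_{\mathbb{D}_n}(\alpha)=q^n-1$; (2) if $n$ is odd, $N_{\mathbb{D}_n}(1)=q^n-1+q^2\frac{q^{n-1}-1}{q^2-1}$; (3) if $n$ is even, $\alpha\neq\beta$, $\alpha\neq(-1)^{n/2}$ and $\beta\neq(-1)^{n/2}$, then $N_{\mathbb{D}_n}(\alpha,\beta)=(q^{n/2}-1)^2$; (4) if $n$ is even and $\alpha=\beta\neq(-1)^{n/2}$, then $N_{\mathbb{D}_n}(\alpha,\alpha)=(q^{n/2}-1)^2+q^2\frac{(q^{(n-2)/2}-1)(q^{n/2}-1)}{q^2-1}$; (5) if $n$ is even, $\alpha\neq\beta$ and $\alpha=(-1)^{n/2}$, then $N_{\mathbb{D}_n}((-1)^{n/2},\beta)=(q^{n/2}-1)^2+(q-1)q^{n/2}$; (6) if $n$ is even, $N_{\mathbb{D}_n}((-1)^{n/2},(-1)^{n/2})=(q^{n/2}-1)^2+2(q-1)q^{n/2}+q^2\frac{(q^{(n-2)/2}-1)(q^{n/2}-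1)}{q^2-1}+q^{(n+2)/2}$.
   Context: $X_{\mathbb{D}_n}(\alpha_1,\dots,\alpha_n)$ is the affine variety over $\mathbb{F}_q$ in variables $x_1,\dots,x_n,x'_1,\dots,x'_n$ defined by $x_1x'_1=1+\alpha_1x_3$, $x_2x'_2=1+\alpha_2x_3$, $x_3x'_3=1+\alpha_3x_1x_2x_4$, $x_ix'_i=1+\alpha_ix_{i-1}x_{i+1}$ for $4\le i\le n-1$, $x_nx'_n=1+\alpha_nx_{n-1}$ (for $n=3$: $x_3x'_3=1+\alpha_3x_1x_2$). Thus in $X_{\mathbb{D}_n}(\alpha,\beta,1,\dots,1)$ the parameters $\alpha,\beta$ sit on the two short leaves $1,2$ attached to vertex $3$. *)

theory Defs
  imports Complex_Main "HOL-Library.FuncSet"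
begin

text \<open>Right-hand side of the i-th defining equation x_i x'_i = rhs of X_{D_n}(a_1,...,a_n);
  indices are 1..n, a :: nat => 'a gives the parameters alpha_i.\<close>
definition D_rhs :: "nat \<Rightarrow> (nat \<Rightarrow> 'a::comm_ring_1) \<Rightarrow> (nat \<Rightarrow> 'a) \<Rightarrow> nat \<Rightarrow> 'a" where
  "D_rhs n a x i =
     (if i = 1 then 1 + a 1 * x 3
      else if i = 2 then 1 + a 2 * x 3
      else if i = 3 then (if n = 3 then 1 + a 3 * x 1 * x 2 else 1 + a 3 * x 1 * x 2 * x 4)
      else if i = n then 1 + a n * x (n - 1)
      else 1 + a i * x (i - 1) * x (i + 1))"

definition D_points :: "nat \<Rightarrow> (nat \<Rightarrow> 'a::{finite,comm_ring_1}) \<Rightarrow> ((nat \<Rightarrow> 'a) \<times> (nat \<Rightarrow> 'a)) set" where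
  "D_points n a = {(x, x'). x \<in> {1..n} \<rightarrow>\<^sub>E (UNIV :: 'a set) \<and> x' \<in> {1..n} \<rightarrow>\<^sub>E (UNIV :: 'a set) \<and>
       (\<forall>i\<in>{1..n}. x i * x' i = D_rhs n a x i)}"

definition N_D_odd :: "nat \<Rightarrow> 'a::{finite,comm_ring_1} \<Rightarrow> nat" where
  "N_D_odd n \<alpha> = card (D_points n (\<lambda>i. if i = 1 then \<alpha> else 1))"

definition N_D_even :: "nat \<Rightarrow> 'a::{finite,comm_ring_1} \<Rightarrow> 'a \<Rightarrow> nat" where
  "N_D_even n \<alpha> \<beta> = card (D_points n (\<lambda>i. if i = 1 then \<alpha> else if i = 2 then \<beta> else 1))"

end

theory Submission
  imports Defs "HOL-Library.Cardinality"
begin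

text \<open>
  A point of \<open>X\<close> is a choice of \<open>x\<close> together with, for each \<open>i\<close>, a solution \<open>x'\<^sub>i\<close> of
  \<open>x\<^sub>i x'\<^sub>i = r\<^sub>i(x)\<close>: there is exactly one if \<open>x\<^sub>i \<noteq> 0\<close>, and \<open>q\<close> or none if \<open>x\<^sub>i = 0\<close>.
  Sort the points by the value of the coordinate \<open>x\<^sub>n\<close> at the end of the long arm. If \<open>x\<^sub>n = c \<noteq> 0\<close>, what
  remains is the count for \<open>\<D>\<^sub>n\<^sub>-\<^sub>1\<close> with \<open>\<alpha>\<^sub>n\<^sub>-\<^sub>1\<close> multiplied by \<open>c\<close>; if \<open>x\<^sub>n = 0\<close>, the
  last equation forces \<open>x\<^sub>n\<^sub>-\<^sub>1 = -1/\<alpha>\<^sub>n\<close>, which removes vertex \<open>n - 1\<close> as well, at the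
  cost of a factor \<open>q\<close>. For the parameters \<open>(\<alpha>, \<beta>, 1, \<dots>, 1, t)\<close> this gives, writing
  \<open>N\<^sub>m(t)\<close> for the count and \<open>S\<^sub>m\<close> for its sum over \<open>t \<noteq> 0\<close>,
  \<open>N\<^sub>m(t) = S\<^sub>m\<^sub>-\<^sub>1 + q N\<^sub>m\<^sub>-\<^sub>2(-1/t)\<close> and \<open>S\<^sub>m = (q - 1) S\<^sub>m\<^sub>-\<^sub>1 + q S\<^sub>m\<^sub>-\<^sub>2\<close>, a recurrence with
  characteristic roots \<open>q\<close> and \<open>-1\<close>. The base cases \<open>m = 3, 4\<close> are direct counts; there the
  coincidence \<open>\<alpha> = \<beta>\<close> contributes the extra \<open>q\<^sup>2\<close> terms, and for even \<open>m\<close> the alternation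
  \<open>t \<mapsto> -1/t\<close> produces the special values \<open>(-1)\<^bsup>m/2\<^esup>\<close>.
\<close>

lemma two_term_recurrence_unique:
  fixes f g :: "nat \<Rightarrow> 'a::comm_ring"
  assumes f: "\<And>m. m \<ge> k + 2 \<Longrightarrow> f m = a * f (m - 1) + b * f (m - 2)"
    and g: "\<And>m. m \<ge> k + 2 \<Longrightarrow> g m = a * g (m - 1) + b * g (m - 2)"
    and "f k = g k" "f (k + 1) = g (k + 1)"
  shows "m \<ge> k \<Longrightarrow> f m = g m"
proof (induction m rule: less_induct)
  case (less m)
  show ?case
  proof (cases "m \<ge> k + 2")
    case True
    then show ?thesis using less.IH[of "m - 1"] less.IH[of "m - 2"] by (simp add: f g)
  next
    case False
    with less.prems have "m = k \<or> m = k + 1" by auto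
    with assms(3,4) show ?thesis by auto
  qed
qed

definition solution_count :: "'a::{finite,field} \<Rightarrow> 'a \<Rightarrow> real" where
  "solution_count u r = real (card {v. u * v = r})"

lemma solution_count_nonzero: "u \<noteq> 0 \<Longrightarrow> solution_count u r = 1"
proof -
  assume "u \<noteq> 0"
  then have "{v. u * v = r} = {r / u}" by (auto simp: field_simps)
  then show ?thesis by (simp add: solution_count_def)
qed

lemma solution_count_zero:
  "solution_count (0::'a::{finite,field}) r = (if r = 0 then real CARD('a) else 0)"
  by (simp add: solution_count_def)

lemma card_field_ge_2: "CARD('a::{finite,field}) \<ge> 2"
proof -
  have "card {0::'a, 1} \<le> CARD('a)" by (rule card_mono) auto
  then show ?thesis by simp
qed

lemma card_nonzero_elements: "real (card (UNIV - {0::'a::{finite,field}})) = real CARD('a) - 1"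
  using card_field_ge_2[where 'a='a] by (simp add: card_Diff_singleton of_nat_diff)

lemma real_card_field_squared_gt_1: "(real CARD('a::{finite,field}))\<^sup>2 - 1 > 0"
proof -
  have "real CARD('a) \<ge> 2" using card_field_ge_2[where 'a='a] by simp
  then have "(real CARD('a))\<^sup>2 \<ge> 2\<^sup>2" by (intro power_mono) auto
  then show ?thesis by simp
qed

lemma sum_solution_count:
  "(\<Sum>u\<in>UNIV. solution_count u (r::'a::{finite,field}))
    = real CARD('a) - 1 + of_bool (r = 0) * real CARD('a)"
proof -
  have "(\<Sum>u\<in>UNIV. solution_count u r)
      = solution_count 0 r + (\<Sum>u\<in>UNIV - {0}. solution_count u r)"
    by (rule sum.remove) auto
  also have "(\<Sum>u\<in>UNIV - {0}. solution_count u r) = real CARD('a) - 1"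
    using card_nonzero_elements[where 'a='a] by (simp add: solution_count_nonzero)
  finally show ?thesis by (simp add: solution_count_zero)
qed

lemma one_plus_mult_eq_0_iff:
  fixes t d :: "'a::field"
  assumes "t \<noteq> 0"
  shows "1 + t * d = 0 \<longleftrightarrow> - 1 / t = d"
  using assms by (auto simp: field_simps add_eq_0_iff)

lemma one_plus_div_eq_0_iff:
  fixes \<alpha> t :: "'a::field"
  assumes "t \<noteq> 0"
  shows "1 + \<alpha> * (- 1 / t) = 0 \<longleftrightarrow> \<alpha> = t"
  using assms by (auto simp: field_simps)

definition weight :: "nat \<Rightarrow> (nat \<Rightarrow> 'a::{finite,field}) \<Rightarrow> real" where
  "weight n a =
     (\<Sum>x\<in>{1..n} \<rightarrow>\<^sub>E UNIV. \<Prod>i\<in>{1..n}. solution_count (x i) (D_rhs n a x i))"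

definition weight_at :: "nat \<Rightarrow> (nat \<Rightarrow> 'a::{finite,field}) \<Rightarrow> 'a \<Rightarrow> real" where
  "weight_at n a c =
     (\<Sum>x\<in>{x\<in>{1..n} \<rightarrow>\<^sub>E UNIV. x n = c}. \<Prod>i\<in>{1..n}. solution_count (x i) (D_rhs n a x i))"

lemma card_D_points: "real (card (D_points n (a::nat \<Rightarrow> 'a::{finite,field}))) = weight n a"
proof -
  have "D_points n a =
      Sigma ({1..n} \<rightarrow>\<^sub>E UNIV) (\<lambda>x. \<Pi>\<^sub>E i\<in>{1..n}. {v. x i * v = D_rhs n a x i})"
    unfolding D_points_def by (auto simp: PiE_iff extensional_def)
  then show ?thesis
    by (simp add: weight_def solution_count_def card_PiE finite_PiE)
qed

lemma weight_eq_sum_weight_at: "weight n a = (\<Sum>c\<in>UNIV. weight_at n a c)"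
  unfolding weight_def weight_at_def
  by (rule sum.group[symmetric]) (auto simp: finite_PiE)

lemma D_rhs_cong:
  assumes "\<And>i. i \<in> {1..n} \<Longrightarrow> a i = b i" and "i \<in> {1..n}"
  shows "D_rhs n a x i = D_rhs n b x i"
  using assms(2) assms(1)[of i] assms(1)[of 1] assms(1)[of 2] assms(1)[of 3] assms(1)[of n]
  unfolding D_rhs_def by auto

lemma weight_cong: "(\<And>i. i \<in> {1..n} \<Longrightarrow> a i = b i) \<Longrightarrow> weight n a = weight n b"
  unfolding weight_def by (intro sum.cong prod.cong refl, subst D_rhs_cong) auto

lemma D_rhs_fun_upd_last:
  assumes "n \<ge> 4" "i \<in> {1..n-1}"
  shows "D_rhs n a (y(n := c)) i = D_rhs (n-1) (a(n-1 := a (n-1) * c)) y i"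
proof -
  consider "i = n - 1" "n = 4" | "i = n - 1" "n > 4" | "i < n - 1" using assms by force
  then show ?thesis
  proof cases
    case 2
    then have "n - 1 \<noteq> 3" "n - 1 - 1 \<noteq> n - 1" "n - 1 + 1 = n" by auto
    with 2 show ?thesis by (auto simp: D_rhs_def algebra_simps)
  qed (use assms in \<open>auto simp: D_rhs_def algebra_simps\<close>)
qed

text \<open>The value \<open>c\<close> of \<open>x\<^sub>n\<close> enters the equation of vertex \<open>n - 1\<close> only as a factor of its
  parameter.\<close>
lemma weight_at_remove_last:
  fixes a :: "nat \<Rightarrow> 'a::{finite,field}"
  assumes n: "n \<ge> 4"
  shows "weight_at n a c =
    (\<Sum>d\<in>UNIV. solution_count c (1 + a n * d) * weight_at (n-1) (a(n-1 := a (n-1) * c)) d)"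
proof -
  define a' where "a' = a(n-1 := a (n-1) * c)"
  define T where "T = {1..n-1} \<rightarrow>\<^sub>E (UNIV::'a set)"
  define Q where "Q y = (\<Prod>i\<in>{1..n-1}. solution_count (y i) (D_rhs (n-1) a' y i))" for y
  have "weight_at n a c = (\<Sum>y\<in>T. solution_count c (1 + a n * y (n-1)) * Q y)"
    unfolding weight_at_def
  proof (rule sym, rule sum.reindex_bij_witness[where j="\<lambda>y. y(n := c)" and i="\<lambda>x. x(n := undefined)"])
    fix y assume y: "y \<in> T"
    then have "y n = undefined" using n unfolding T_def by (auto simp: PiE_iff extensional_def)
    then show "(y(n := c))(n := undefined) = y" by auto
    show "y(n := c) \<in> {x \<in> {1..n} \<rightarrow>\<^sub>E UNIV. x n = c}"
      using y n unfolding T_def by (auto simp: PiE_iff extensional_def)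
    have ins: "{1..n} = insert n {1..n-1}" using n by auto
    have "(\<Prod>i\<in>{1..n}. solution_count ((y(n := c)) i) (D_rhs n a (y(n := c)) i))
        = solution_count c (D_rhs n a (y(n := c)) n)
          * (\<Prod>i\<in>{1..n-1}. solution_count (y i) (D_rhs n a (y(n := c)) i))"
      unfolding ins by (subst prod.insert) (auto intro!: prod.cong)
    also have "(\<Prod>i\<in>{1..n-1}. solution_count (y i) (D_rhs n a (y(n := c)) i)) = Q y"
      unfolding Q_def a'_def using n by (intro prod.cong refl) (auto simp: D_rhs_fun_upd_last)
    also have "D_rhs n a (y(n := c)) n = 1 + a n * y (n-1)"
      using n by (auto simp: D_rhs_def)
    finally show "(\<Prod>i\<in>{1..n}. solution_count ((y(n := c)) i) (D_rhs n a (y(n := c)) i))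
        = solution_count c (1 + a n * y (n-1)) * Q y" .
  qed (auto simp: T_def PiE_iff extensional_def)
  also have "\<dots> =
      (\<Sum>d\<in>UNIV. \<Sum>y\<in>{y\<in>T. y (n-1) = d}. solution_count c (1 + a n * y (n-1)) * Q y)"
    by (rule sum.group[symmetric]) (auto simp: T_def finite_PiE)
  also have "\<dots> = (\<Sum>d\<in>UNIV. solution_count c (1 + a n * d) * weight_at (n-1) a' d)"
    unfolding weight_at_def Q_def T_def by (intro sum.cong refl) (auto simp: sum_distrib_left)
  finally show ?thesis unfolding a'_def .
qed

lemma weight_at_nonzero:
  fixes a :: "nat \<Rightarrow> 'a::{finite,field}"
  assumes "n \<ge> 4" "c \<noteq> 0"
  shows "weight_at n a c = weight (n-1) (a(n-1 := a (n-1) * c))"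
  using assms by (simp add: weight_at_remove_last solution_count_nonzero weight_eq_sum_weight_at)

text \<open>With \<open>x\<^sub>n = 0\<close> the last equation forces \<open>x\<^sub>n\<^sub>-\<^sub>1 = -1/\<alpha>\<^sub>n\<close> and leaves \<open>x'\<^sub>n\<close> free;
  vertex \<open>n - 1\<close> then sees the parameter \<open>\<alpha>\<^sub>n\<^sub>-\<^sub>1 \<cdot> 0\<close>.\<close>
lemma weight_at_zero:
  fixes a :: "nat \<Rightarrow> 'a::{finite,field}"
  assumes "n \<ge> 4" "a n \<noteq> 0"
  shows "weight_at n a 0 = real CARD('a) * weight_at (n-1) (a(n-1 := 0)) (- 1 / a n)"
proof -
  have "solution_count 0 (1 + a n * d) = (if - 1 / a n = d then real CARD('a) else 0)" for d
    using one_plus_mult_eq_0_iff[OF assms(2), of d] by (simp add: solution_count_zero)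
  then show ?thesis
    using assms(1)
    by (simp add: weight_at_remove_last if_distrib[where f="\<lambda>z. z * _"] cong: if_cong)
qed

lemma weight_at_3:
  fixes a :: "nat \<Rightarrow> 'a::{finite,field}"
  shows "weight_at 3 a c =
    (\<Sum>u\<in>UNIV. \<Sum>v\<in>UNIV. solution_count u (1 + a 1 * c) * solution_count v (1 + a 2 * c)
                           * solution_count c (1 + a 3 * u * v))"
proof -
  define j :: "'a \<times> 'a \<Rightarrow> nat \<Rightarrow> 'a" where
    "j p = (\<lambda>i. if i = 1 then fst p else if i = 2 then snd p else if i = 3 then c else undefined)" for p
  have "{1..3::nat} = {1,2,3}" by auto
  then have "(\<Sum>p\<in>UNIV \<times> UNIV. solution_count (fst p) (1 + a 1 * c)
      * solution_count (snd p) (1 + a 2 * c) * solution_count c (1 + a 3 * fst p * snd p))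
    = weight_at 3 a c"
    unfolding weight_at_def
    by (intro sum.reindex_bij_witness[where j=j and i="\<lambda>x. (x 1, x 2)"])
       (auto simp: j_def D_rhs_def PiE_iff extensional_def)
  then show ?thesis by (simp add: sum.cartesian_product case_prod_beta)
qed

lemma weight_at_3_nonzero:
  fixes a :: "nat \<Rightarrow> 'a::{finite,field}"
  assumes "c \<noteq> 0"
  shows "weight_at 3 a c = (real CARD('a) - 1 + of_bool (1 + a 1 * c = 0) * real CARD('a))
                          * (real CARD('a) - 1 + of_bool (1 + a 2 * c = 0) * real CARD('a))"
  using assms
  by (simp add: weight_at_3 solution_count_nonzero sum_solution_count[symmetric] sum_product)

lemma weight_at_3_zero:
  fixes a :: "nat \<Rightarrow> 'a::{finite,field}"
  assumes "a 3 \<noteq> 0"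
  shows "weight_at 3 a 0 = real CARD('a) * (real CARD('a) - 1)"
proof -
  let ?q = "real CARD('a)"
  have inner: "(\<Sum>v\<in>UNIV. solution_count u 1 * solution_count v 1 * solution_count 0 (1 + a 3 * u * v))
      = of_bool (u \<noteq> 0) * ?q" for u
  proof (cases "u = 0")
    case False
    then have "a 3 * u \<noteq> 0" using assms by simp
    from one_plus_mult_eq_0_iff[OF this]
    have "solution_count u 1 * solution_count v 1 * solution_count 0 (1 + a 3 * u * v)
        = of_bool (- 1 / (a 3 * u) = v) * ?q" for v
      using False by (cases "v = 0") (auto simp: solution_count_zero solution_count_nonzero mult.assoc)
    then show ?thesis using False by simp
  qed (simp add: solution_count_zero)
  have "weight_at 3 a 0 = (\<Sum>u::'a\<in>UNIV. of_bool (u \<noteq> 0) * ?q)"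
    unfolding weight_at_3 by (simp only: mult_zero_right add_0_right inner)
  also have "\<dots> = ?q * (?q - 1)"
  proof -
    have "{u::'a. u \<noteq> 0} = UNIV - {0}" by auto
    then show ?thesis using card_nonzero_elements[where 'a='a] by simp
  qed
  finally show ?thesis .
qed

lemma sum_nonzero_two_conditions:
  fixes u v :: "'a::{finite,field}"
  assumes "u \<noteq> 0" "v \<noteq> 0"
  defines "q \<equiv> real CARD('a)"
  shows "(\<Sum>c\<in>UNIV - {0}. (q - 1 + of_bool (u = c) * q) * (q - 1 + of_bool (v = c) * q))
       = (q - 1) * (q\<^sup>2 + 1) + of_bool (u = v) * q\<^sup>2"
proof -
  have "(q - 1 + of_bool (u = c) * q) * (q - 1 + of_bool (v = c) * q)
     = (q - 1)\<^sup>2 + (if u = c then q * (q - 1) else 0) + (if v = c then q * (q - 1) else 0)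
       + (if u = c then of_bool (u = v) * q\<^sup>2 else 0)" for c
    by (auto simp: power2_eq_square algebra_simps)
  then have "(\<Sum>c\<in>UNIV - {0}. (q - 1 + of_bool (u = c) * q) * (q - 1 + of_bool (v = c) * q))
      = (q - 1) * (q - 1)\<^sup>2 + q * (q - 1) + q * (q - 1) + of_bool (u = v) * q\<^sup>2"
    using assms card_nonzero_elements[where 'a='a]
    by (simp add: sum.distrib q_def)
  then show ?thesis by (simp add: power2_eq_square algebra_simps)
qed

definition D_params :: "'a \<Rightarrow> 'a \<Rightarrow> nat \<Rightarrow> 'a \<Rightarrow> nat \<Rightarrow> 'a::{finite,field}" where
  "D_params \<alpha> \<beta> m t = (\<lambda>i. if i = 1 then \<alpha> else if i = 2 then \<beta> else if i = m then t else 1)"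

definition point_count :: "'a \<Rightarrow> 'a \<Rightarrow> nat \<Rightarrow> 'a::{finite,field} \<Rightarrow> real" where
  "point_count \<alpha> \<beta> m t = weight m (D_params \<alpha> \<beta> m t)"

definition point_count_sum :: "'a::{finite,field} \<Rightarrow> 'a \<Rightarrow> nat \<Rightarrow> real" where
  "point_count_sum \<alpha> \<beta> m = (\<Sum>t\<in>UNIV - {0}. point_count \<alpha> \<beta> m t)"

lemma point_count_split_last:
  fixes \<alpha> :: "'a::{finite,field}"
  assumes "m \<ge> 4"
  shows "point_count \<alpha> \<beta> m t
    = point_count_sum \<alpha> \<beta> (m-1) + weight_at m (D_params \<alpha> \<beta> m t) 0"
proof -
  have "point_count \<alpha> \<beta> m t
      = weight_at m (D_params \<alpha> \<beta> m t) 0 + (\<Sum>c\<in>UNIV - {0}. weight_at m (D_params \<alpha> \<beta> m t) c)"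
    unfolding point_count_def weight_eq_sum_weight_at by (rule sum.remove) auto
  also have "(\<Sum>c\<in>UNIV - {0}. weight_at m (D_params \<alpha> \<beta> m t) c) = point_count_sum \<alpha> \<beta> (m-1)"
    unfolding point_count_sum_def point_count_def
  proof (rule sum.cong[OF refl])
    fix c :: 'a assume "c \<in> UNIV - {0}"
    with assms have "weight_at m (D_params \<alpha> \<beta> m t) c
        = weight (m-1) ((D_params \<alpha> \<beta> m t)(m-1 := D_params \<alpha> \<beta> m t (m-1) * c))"
      by (simp add: weight_at_nonzero)
    also have "\<dots> = weight (m-1) (D_params \<alpha> \<beta> (m-1) c)"
      using assms by (intro weight_cong) (auto simp: D_params_def)
    finally show "weight_at m (D_params \<alpha> \<beta> m t) c = weight (m-1) (D_params \<alpha> \<beta> (m-1) c)" .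
  qed
  finally show ?thesis by simp
qed

lemma point_count_4:
  fixes \<alpha> :: "'a::{finite,field}"
  assumes t: "t \<noteq> 0"
  defines "q \<equiv> real CARD('a)"
  shows "point_count \<alpha> \<beta> 4 t
    = point_count_sum \<alpha> \<beta> 3 + q * ((q - 1 + of_bool (\<alpha> = t) * q) * (q - 1 + of_bool (\<beta> = t) * q))"
proof -
  have "weight_at 4 (D_params \<alpha> \<beta> 4 t) 0
      = q * weight_at 3 ((D_params \<alpha> \<beta> 4 t)(3 := 0)) (- 1 / t)"
    using weight_at_zero[of 4 "D_params \<alpha> \<beta> 4 t"] t by (simp add: D_params_def q_def)
  also have "\<dots> = q * ((q - 1 + of_bool (\<alpha> = t) * q) * (q - 1 + of_bool (\<beta> = t) * q))"
    using t by (simp add: weight_at_3_nonzero D_params_def one_plus_div_eq_0_iff q_def)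
  finally show ?thesis by (simp add: point_count_split_last)
qed

lemma point_count_recurrence:
  fixes \<alpha> :: "'a::{finite,field}"
  assumes m: "m \<ge> 5" and t: "t \<noteq> 0"
  shows "point_count \<alpha> \<beta> m t
    = point_count_sum \<alpha> \<beta> (m-1) + real CARD('a) * point_count \<alpha> \<beta> (m-2) (- 1 / t)"
proof -
  have "weight_at m (D_params \<alpha> \<beta> m t) 0
      = real CARD('a) * weight_at (m-1) ((D_params \<alpha> \<beta> m t)(m-1 := 0)) (- 1 / t)"
    using weight_at_zero[of m "D_params \<alpha> \<beta> m t"] m t by (simp add: D_params_def)
  also have "weight_at (m-1) ((D_params \<alpha> \<beta> m t)(m-1 := 0)) (- 1 / t)
     = weight (m-1-1) ((D_params \<alpha> \<beta> m t)
         (m-1 := 0, m-1-1 := ((D_params \<alpha> \<beta> m t)(m-1 := 0)) (m-1-1) * (- 1 / t)))"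
    using m t by (intro weight_at_nonzero) auto
  also have "\<dots> = point_count \<alpha> \<beta> (m-2) (- 1 / t)"
    unfolding point_count_def diff_diff_left one_add_one
    using m by (intro weight_cong) (auto simp: D_params_def)
  finally show ?thesis using m by (simp add: point_count_split_last)
qed

lemma point_count_3:
  fixes \<alpha> :: "'a::{finite,field}"
  assumes a: "\<alpha> \<noteq> 0" and b: "\<beta> \<noteq> 0" and t: "t \<noteq> 0"
  defines "q \<equiv> real CARD('a)"
  shows "point_count \<alpha> \<beta> 3 t = q ^ 3 - 1 + of_bool (\<alpha> = \<beta>) * q\<^sup>2"
proof -
  have "point_count \<alpha> \<beta> 3 t
      = weight_at 3 (D_params \<alpha> \<beta> 3 t) 0
        + (\<Sum>c\<in>UNIV - {0}. weight_at 3 (D_params \<alpha> \<beta> 3 t) c)"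
    unfolding point_count_def weight_eq_sum_weight_at by (rule sum.remove) auto
  also have "weight_at 3 (D_params \<alpha> \<beta> 3 t) 0 = q * (q - 1)"
    using t by (simp add: weight_at_3_zero D_params_def q_def)
  also have "(\<Sum>c\<in>UNIV - {0}. weight_at 3 (D_params \<alpha> \<beta> 3 t) c)
      = (\<Sum>c\<in>UNIV - {0}.
           (q - 1 + of_bool (- 1 / \<alpha> = c) * q) * (q - 1 + of_bool (- 1 / \<beta> = c) * q))"
    using a b by (intro sum.cong refl)
      (simp add: weight_at_3_nonzero D_params_def one_plus_mult_eq_0_iff q_def)
  also have "\<dots> = (q - 1) * (q\<^sup>2 + 1) + of_bool (\<alpha> = \<beta>) * q\<^sup>2"
    using a b by (simp add: sum_nonzero_two_conditions q_def)
  finally show ?thesis by (simp add: power2_eq_square power3_eq_cube algebra_simps)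
qed

lemma point_count_sum_3:
  fixes \<alpha> :: "'a::{finite,field}"
  assumes "\<alpha> \<noteq> 0" "\<beta> \<noteq> 0"
  defines "q \<equiv> real CARD('a)"
  shows "point_count_sum \<alpha> \<beta> 3 = (q - 1) * (q ^ 3 - 1 + of_bool (\<alpha> = \<beta>) * q\<^sup>2)"
  using assms card_nonzero_elements[where 'a='a] by (simp add: point_count_sum_def point_count_3)

lemma point_count_sum_4:
  fixes \<alpha> :: "'a::{finite,field}"
  assumes "\<alpha> \<noteq> 0" "\<beta> \<noteq> 0"
  defines "q \<equiv> real CARD('a)"
  shows "point_count_sum \<alpha> \<beta> 4
    = (q - 1) * point_count_sum \<alpha> \<beta> 3 + q * ((q - 1) * (q\<^sup>2 + 1) + of_bool (\<alpha> = \<beta>) * q\<^sup>2)"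
  using assms card_nonzero_elements[where 'a='a]
  by (simp add: point_count_sum_def[of _ _ 4] point_count_4 sum.distrib sum_distrib_left[symmetric]
      sum_nonzero_two_conditions q_def)

lemma point_count_sum_recurrence:
  fixes \<alpha> :: "'a::{finite,field}"
  assumes m: "m \<ge> 5"
  defines "q \<equiv> real CARD('a)"
  shows "point_count_sum \<alpha> \<beta> m
    = (q - 1) * point_count_sum \<alpha> \<beta> (m-1) + q * point_count_sum \<alpha> \<beta> (m-2)"
proof -
  have "(\<Sum>t\<in>UNIV - {0::'a}. point_count \<alpha> \<beta> (m-2) (- 1 / t)) = point_count_sum \<alpha> \<beta> (m-2)"
    unfolding point_count_sum_def
    by (rule sum.reindex_bij_witness[where i="\<lambda>t. - 1 / t" and j="\<lambda>t. - 1 / t"]) auto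
  then show ?thesis
    using m card_nonzero_elements[where 'a='a]
    by (simp add: point_count_sum_def[of _ _ m] point_count_recurrence sum.distrib
        sum_distrib_left[symmetric] q_def)
qed

lemma point_count_sum_closed_form:
  fixes \<alpha> :: "'a::{finite,field}"
  assumes a: "\<alpha> \<noteq> 0" and b: "\<beta> \<noteq> 0" and m: "m \<ge> 3"
  defines "q \<equiv> real CARD('a)"
  defines "D \<equiv> of_bool (\<alpha> = \<beta>) * q\<^sup>2 / (q\<^sup>2 - 1)"
  shows "point_count_sum \<alpha> \<beta> m = (q - 1) * (q ^ m + (-1) ^ m + D * (q ^ (m - 1) + (-1) ^ m))"
proof -
  have E: "of_bool (\<alpha> = \<beta>) * q\<^sup>2 = D * (q\<^sup>2 - 1)"
    using real_card_field_squared_gt_1[where 'a='a] unfolding D_def q_def by simp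
  define g where "g m = (q - 1) * (q ^ m + (-1) ^ m + D * (q ^ (m - 1) + (-1) ^ m))" for m
  have g_rec: "g m = (q - 1) * g (m - 1) + q * g (m - 2)" if m5: "m \<ge> 3 + 2" for m
  proof -
    obtain j where "m = 3 + j" using le_Suc_ex[of 3 m] m5 by auto
    then show ?thesis unfolding g_def by (simp add: eval_nat_numeral algebra_simps)
  qed
  have S_rec: "point_count_sum \<alpha> \<beta> m
      = (q - 1) * point_count_sum \<alpha> \<beta> (m - 1) + q * point_count_sum \<alpha> \<beta> (m - 2)"
    if "m \<ge> 3 + 2" for m
    using that unfolding q_def by (intro point_count_sum_recurrence) simp
  have S3: "point_count_sum \<alpha> \<beta> 3 = (q - 1) * (q ^ 3 - 1 + D * (q\<^sup>2 - 1))"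
    using point_count_sum_3[OF a b] unfolding q_def[symmetric] E .
  have "point_count_sum \<alpha> \<beta> 4
      = (q - 1) * ((q - 1) * (q ^ 3 - 1 + D * (q\<^sup>2 - 1)))
        + q * ((q - 1) * (q\<^sup>2 + 1) + D * (q\<^sup>2 - 1))"
    using point_count_sum_4[OF a b] unfolding q_def[symmetric] E S3 .
  with S3 have "point_count_sum \<alpha> \<beta> 3 = g 3" "point_count_sum \<alpha> \<beta> (3 + 1) = g (3 + 1)"
    unfolding g_def by (simp_all add: eval_nat_numeral algebra_simps)
  from two_term_recurrence_unique[where k=3, OF S_rec g_rec this m]
  show ?thesis by (simp add: g_def)
qed

lemma point_count_odd_closed_form:
  fixes \<alpha> :: "'a::{finite,field}"
  assumes a: "\<alpha> \<noteq> 0" and b: "\<beta> \<noteq> 0"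
  defines "q \<equiv> real CARD('a)"
  defines "D \<equiv> of_bool (\<alpha> = \<beta>) * q\<^sup>2 / (q\<^sup>2 - 1)"
  shows "t \<noteq> 0 \<Longrightarrow>
    point_count \<alpha> \<beta> (2 * k + 3) t = q ^ (2 * k + 3) - 1 + D * (q ^ (2 * k + 2) - 1)"
proof (induction k arbitrary: t)
  case 0
  have "of_bool (\<alpha> = \<beta>) * q\<^sup>2 = D * (q\<^sup>2 - 1)"
    using real_card_field_squared_gt_1[where 'a='a] unfolding D_def q_def by simp
  with point_count_3[OF a b "0.prems"] show ?case unfolding q_def by (simp add: eval_nat_numeral)
next
  case (Suc k)
  have m: "2 * Suc k + 3 = 2 * k + 5" "2 * Suc k + 2 = 2 * k + 4" "2 * k + 4 - 1 = 2 * k + 3"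
    "2 * k + 5 - 1 = 2 * k + 4" "2 * k + 5 - 2 = 2 * k + 3" by simp_all
  have "point_count \<alpha> \<beta> (2 * k + 5) t
      = point_count_sum \<alpha> \<beta> (2 * k + 4) + q * point_count \<alpha> \<beta> (2 * k + 3) (- 1 / t)"
    using Suc.prems
    by (intro point_count_recurrence[where m="2 * k + 5" and t=t, unfolded m(4,5), folded q_def]) auto
  also have "point_count_sum \<alpha> \<beta> (2 * k + 4)
      = (q - 1) * (q ^ (2 * k + 4) + 1 + D * (q ^ (2 * k + 3) + 1))"
    using point_count_sum_closed_form[OF a b, where m="2 * k + 4", unfolded m(3), folded q_def, folded D_def]
    by simp
  also have "point_count \<alpha> \<beta> (2 * k + 3) (- 1 / t)
      = q ^ (2 * k + 3) - 1 + D * (q ^ (2 * k + 2) - 1)"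
    using Suc.IH Suc.prems by simp
  also have "(q - 1) * (q ^ (2 * k + 4) + 1 + D * (q ^ (2 * k + 3) + 1))
      + q * (q ^ (2 * k + 3) - 1 + D * (q ^ (2 * k + 2) - 1))
      = q ^ (2 * k + 5) - 1 + D * (q ^ (2 * k + 4) - 1)"
    by (simp add: eval_nat_numeral algebra_simps)
  finally show ?case unfolding m(1,2) .
qed

text \<open>Each step of the recurrence replaces \<open>t\<close> by \<open>-1/t = -t\<close>, whence the sign \<open>(-1)\<^sup>k\<close>.\<close>
lemma point_count_even_closed_form:
  fixes \<alpha> :: "'a::{finite,field}"
  assumes a: "\<alpha> \<noteq> 0" and b: "\<beta> \<noteq> 0"
  defines "q \<equiv> real CARD('a)"
  defines "D \<equiv> of_bool (\<alpha> = \<beta>) * q\<^sup>2 / (q\<^sup>2 - 1)"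
  shows "t * t = 1 \<Longrightarrow> point_count \<alpha> \<beta> (2 * k + 4) t
    = (q ^ (k + 2) - 1)\<^sup>2
      + (q - 1) * q ^ (k + 2) * (of_bool (\<alpha> = (-1) ^ k * t) + of_bool (\<beta> = (-1) ^ k * t))
      + q ^ (k + 3) * of_bool (\<alpha> = (-1) ^ k * t) * of_bool (\<beta> = (-1) ^ k * t)
      + D * (q ^ (k + 1) - 1) * (q ^ (k + 2) - 1)"
proof (induction k arbitrary: t)
  case 0
  then have "t \<noteq> 0" by auto
  have E: "of_bool (\<alpha> = \<beta>) * q\<^sup>2 = D * (q\<^sup>2 - 1)"
    using real_card_field_squared_gt_1[where 'a='a] unfolding D_def q_def by simp
  show ?case
    using point_count_4[OF \<open>t \<noteq> 0\<close>, of \<alpha> \<beta>]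
      point_count_sum_3[OF a b, unfolded q_def[symmetric] E]
    unfolding q_def[symmetric] by (simp add: eval_nat_numeral algebra_simps)
next
  case (Suc k)
  then have t: "t \<noteq> 0" by auto
  with Suc.prems have inv: "- 1 / t = - t" by (simp add: field_simps)
  have m: "2 * Suc k + 4 = 2 * k + 6" "2 * k + 5 - 1 = 2 * k + 4"
    "2 * k + 6 - 1 = 2 * k + 5" "2 * k + 6 - 2 = 2 * k + 4" by simp_all
  define P where "P = q ^ (k + 1)"
  have pw: "q ^ (2 * k + 5) = q * q * q * (P * P)" "q ^ (2 * k + 4) = q * q * (P * P)"
    "q ^ (k + 2) = q * P" "q ^ (k + 3) = q * q * P"
    "q ^ (Suc k + 1) = q * P" "q ^ (Suc k + 2) = q * q * P" "q ^ (Suc k + 3) = q * q * q * P"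
    unfolding P_def by (simp_all add: power_add power_mult power_mult_distrib eval_nat_numeral)
  have sgn: "(-1) ^ k * - t = (-1) ^ Suc k * t" by simp
  define A :: real where "A = of_bool (\<alpha> = (-1) ^ Suc k * t)"
  define B :: real where "B = of_bool (\<beta> = (-1) ^ Suc k * t)"
  have "point_count \<alpha> \<beta> (2 * k + 6) t
      = point_count_sum \<alpha> \<beta> (2 * k + 5) + q * point_count \<alpha> \<beta> (2 * k + 4) (- t)"
    using t
    by (intro point_count_recurrence[where m="2 * k + 6" and t=t, unfolded m(3,4) inv, folded q_def]) auto
  also have "point_count_sum \<alpha> \<beta> (2 * k + 5)
      = (q - 1) * (q ^ (2 * k + 5) - 1 + D * (q ^ (2 * k + 4) - 1))"
    using point_count_sum_closed_form[OF a b, where m="2 * k + 5", unfolded m(2), folded q_def, folded D_def]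
    by simp
  also have "point_count \<alpha> \<beta> (2 * k + 4) (- t)
      = (q ^ (k + 2) - 1)\<^sup>2 + (q - 1) * q ^ (k + 2) * (A + B) + q ^ (k + 3) * A * B
        + D * (q ^ (k + 1) - 1) * (q ^ (k + 2) - 1)"
    using Suc.IH[of "- t"] Suc.prems unfolding sgn A_def B_def by simp
  finally show ?case
    unfolding m pw P_def[symmetric] A_def[symmetric] B_def[symmetric]
    by (simp add: power2_eq_square algebra_simps)
qed

lemma N_D_odd_formula:
  fixes \<alpha> :: "'a::{finite,field}"
  assumes "n \<ge> 3" "odd n" "\<alpha> \<noteq> 0"
  defines "q \<equiv> real CARD('a)"
  shows "real (N_D_odd n \<alpha>)
    = q ^ n - 1 + of_bool (\<alpha> = 1) * q\<^sup>2 * (q ^ (n - 1) - 1) / (q\<^sup>2 - 1)"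
proof -
  define k where "k = (n - 3) div 2"
  have n: "n = 2 * k + 3" "n - 1 = 2 * k + 2" using assms(1,2) unfolding k_def by presburger+
  have "(\<lambda>i. if i = 1 then \<alpha> else 1) = D_params \<alpha> 1 n 1" by (auto simp: D_params_def)
  then have "real (N_D_odd n \<alpha>) = point_count \<alpha> 1 n 1"
    unfolding N_D_odd_def point_count_def by (simp add: card_D_points)
  then show ?thesis
    using point_count_odd_closed_form[OF assms(3) one_neq_zero, where k=k and t=1]
    unfolding n q_def by simp
qed

lemma N_D_even_formula:
  fixes \<alpha> :: "'a::{finite,field}"
  assumes "n \<ge> 3" "even n" "\<alpha> \<noteq> 0" "\<beta> \<noteq> 0"
  defines "q \<equiv> real CARD('a)" and "s \<equiv> (-1) ^ (n div 2) :: 'a"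
  shows "real (N_D_even n \<alpha> \<beta>)
    = (q ^ (n div 2) - 1)\<^sup>2
      + (q - 1) * q ^ (n div 2) * (of_bool (\<alpha> = s) + of_bool (\<beta> = s))
      + q ^ ((n + 2) div 2) * of_bool (\<alpha> = s) * of_bool (\<beta> = s)
      + of_bool (\<alpha> = \<beta>) * q\<^sup>2 * ((q ^ ((n - 2) div 2) - 1) * (q ^ (n div 2) - 1))
        / (q\<^sup>2 - 1)"
proof -
  define k where "k = (n - 4) div 2"
  have n: "n = 2 * k + 4" "n div 2 = k + 2" "(n + 2) div 2 = k + 3" "(n - 2) div 2 = k + 1"
    using assms(1,2) unfolding k_def by presburger+
  have s: "s = (-1) ^ k * 1" unfolding s_def n(2) by simp
  have "(\<lambda>i. if i = 1 then \<alpha> else if i = 2 then \<beta> else 1) = D_params \<alpha> \<beta> n 1"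
    by (auto simp: D_params_def)
  then have "real (N_D_even n \<alpha> \<beta>) = point_count \<alpha> \<beta> n 1"
    unfolding N_D_even_def point_count_def by (simp add: card_D_points)
  then show ?thesis
    using point_count_even_closed_form[OF assms(3,4), where k=k and t=1] unfolding n(2-4) s q_def
    by (simp add: n(1) mult.assoc)
qed

theorem mainTheorem16:
  fixes n :: nat and q :: real
  assumes "n \<ge> 3"
  defines "q \<equiv> real (card (UNIV :: 'a::{finite,field} set))"
  shows
   "(odd n \<longrightarrow> (\<forall>\<alpha>::'a. \<alpha> \<noteq> 0 \<and> \<alpha> \<noteq> 1 \<longrightarrow> real (N_D_odd n \<alpha>) = q ^ n - 1)) \<and>
    (odd n \<longrightarrow> real (N_D_odd n (1::'a)) = q ^ n - 1 + q ^ 2 * (q ^ (n - 1) - 1) / (q ^ 2 - 1)) \<and>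
    (even n \<longrightarrow> (\<forall>\<alpha> \<beta>::'a. \<alpha> \<noteq> 0 \<and> \<beta> \<noteq> 0 \<and> \<alpha> \<noteq> \<beta> \<and> \<alpha> \<noteq> (-1) ^ (n div 2) \<and> \<beta> \<noteq> (-1) ^ (n div 2) \<longrightarrow>
        real (N_D_even n \<alpha> \<beta>) = (q ^ (n div 2) - 1) ^ 2)) \<and>
    (even n \<longrightarrow> (\<forall>\<alpha>::'a. \<alpha> \<noteq> 0 \<and> \<alpha> \<noteq> (-1) ^ (n div 2) \<longrightarrow>
        real (N_D_even n \<alpha> \<alpha>) = (q ^ (n div 2) - 1) ^ 2
          + q ^ 2 * ((q ^ ((n - 2) div 2) - 1) * (q ^ (n div 2) - 1)) / (q ^ 2 - 1))) \<and>
    (even n \<longrightarrow> (\<forall>\<beta>::'a. \<beta> \<noteq> 0 \<and> \<beta> \<noteq> (-1) ^ (n div 2) \<longrightarrow>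
        real (N_D_even n ((-1) ^ (n div 2)) \<beta>) = (q ^ (n div 2) - 1) ^ 2 + (q - 1) * q ^ (n div 2))) \<and>
    (even n \<longrightarrow>
        real (N_D_even n ((-1) ^ (n div 2) :: 'a) ((-1) ^ (n div 2))) = (q ^ (n div 2) - 1) ^ 2
          + 2 * (q - 1) * q ^ (n div 2)
          + q ^ 2 * ((q ^ ((n - 2) div 2) - 1) * (q ^ (n div 2) - 1)) / (q ^ 2 - 1)
          + q ^ ((n + 2) div 2))"
proof -
  note odd = N_D_odd_formula[where 'a='a, OF assms(1), folded q_def]
  note even = N_D_even_formula[where 'a='a, OF assms(1), folded q_def]
  show ?thesis
    by (intro conjI impI allI) (auto simp: odd even algebra_simps)
qed

end
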